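(* Let $M\ge 2$ and let $T$ be a positive even integer. For $k=0,1,\dots,T/2$ put $\omega_k=2\pi k/T$. Let $A_{ijk}\ge 0$ and $\phi_{ijk}\in\mathbb{R}$ be given for $1\le i,j\le M$, $0\le k\le T/2$. For $\boldsymbol{\tau}=(\tau_1,\dots,\tau_M)\in\mathbb{R}^M$ write $\tau_{ij}=\tau_j-\tau_i$, and define $$\mathcal{J}(\boldsymbol{\tau})=\frac{1}{T}\sum_{k=0}^{T/2}\sum_{i=1}^{M}\sum_{j=1}^{M}A_{ijk}\cos(\omega_k\tau_{ij}+\phi_{ijk}).$$ For auxiliary variables $\boldsymbol{\theta}=(\theta_{ijk})$ with $\theta_{ijk}\in[-\pi,\pi]$, define $$Q(\boldsymbol{\tau},\boldsymbol{\theta})=\frac{1}{T}\sum_{k=0}^{T/2}\sum_{i=1}^{M}\sum_{j=1}^{M}\Big\{-B_{ijk}\big(\omega_k\tau_{ij}+\phi_{ijk}+2\nu_{ijk}\pi\big)^2+A_{ijk}\big(\cos\theta_{ijk}+\tfrac12\theta_{ijk}\sin\theta_{ijk}\big)\Big\},\qquad B_{ijk}=\frac{A_{ijk}}{2}\frac{\sin\theta_{ijk}}{\theta_{ijk}},$$ where $\sin\theta/\theta$ is interpreted as $1$ at $\theta=0$, and where, for the given $\boldsymbol{\tau}$, $\nu_{ijk}\in\mathbb{Z}$ is chosen such that $|\omega_k\tau_{ij}+\phi_{ijk}+2\nu_{ijk}\pi|\le\pi$. Then $Q$ is an auxiliary function for $\mathcal{J}$: $\mathcal{J}(\boldsymbol{\tau})\ge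 Q(\boldsymbol{\tau},\boldsymbol{\theta})$ for every $\boldsymbol{\tau}\in\mathbb{R}^M$ and every such $\boldsymbol{\theta}$, and $Q(\boldsymbol{\tau},\boldsymbol{\theta})=\mathcal{J}(\boldsymbol{\tau})$ holds when $\theta_{ijk}=\omega_k\tau_{ij}+\phi_{ijk}+2\nu_{ijk}\pi$ for all $i,j,k$.
   Context: This arises in time-delay estimation: $\tau_i$ are time delays (relative to a reference sensor) at $M$ sensors, and in the paper $A_{ijk}=\beta_k a_{ik}a_{jk}|V_{ijk}|$, $\phi_{ijk}=\angle V_{ijk}$, where $V_{ijk}$ are entries of the Hermitian spatial covariance matrix of the observations at frequency $k$, $a_{ik}\ge 0$ are relative amplitudes, and $\beta_0=\beta_{T/2}=1$, $\beta_k=2$ otherwise; $\mathcal{J}$ is then (up to a positive constant factor for fixed amplitudes) the multichannel cross-correlation objective. Only $A_{ijk}\ge0$ is needed for the statement. *)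

theory Defs
  imports Complex_Main
begin

definition omega :: "nat \<Rightarrow> nat \<Rightarrow> real" where
  "omega T k = 2 * pi * real k / real T"

definition sinc :: "real \<Rightarrow> real" where
  "sinc \<theta> = (if \<theta> = 0 then 1 else sin \<theta> / \<theta>)"

definition Jobj :: "nat \<Rightarrow> nat \<Rightarrow> (nat \<Rightarrow> nat \<Rightarrow> nat \<Rightarrow> real) \<Rightarrow>
    (nat \<Rightarrow> nat \<Rightarrow> nat \<Rightarrow> real) \<Rightarrow> (nat \<Rightarrow> real) \<Rightarrow> real" where
  "Jobj M T A \<phi> \<tau> = (1 / real T) *
     (\<Sum>k\<in>{0..T div 2}. \<Sum>i\<in>{1..M}. \<Sum>j\<in>{1..M}.
        A i j k * cos (omega T k * (\<tau> j - \<tau> i) + \<phi> i j k))"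

definition Bcoef :: "real \<Rightarrow> real \<Rightarrow> real" where
  "Bcoef a \<theta> = a / 2 * sinc \<theta>"

definition Qaux :: "nat \<Rightarrow> nat \<Rightarrow> (nat \<Rightarrow> nat \<Rightarrow> nat \<Rightarrow> real) \<Rightarrow>
    (nat \<Rightarrow> nat \<Rightarrow> nat \<Rightarrow> real) \<Rightarrow> (nat \<Rightarrow> nat \<Rightarrow> nat \<Rightarrow> int) \<Rightarrow>
    (nat \<Rightarrow> real) \<Rightarrow> (nat \<Rightarrow> nat \<Rightarrow> nat \<Rightarrow> real) \<Rightarrow> real" where
  "Qaux M T A \<phi> \<nu> \<tau> \<theta> = (1 / real T) *
     (\<Sum>k\<in>{0..T div 2}. \<Sum>i\<in>{1..M}. \<Sum>j\<in>{1..M}.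
        - Bcoef (A i j k) (\<theta> i j k) *
            (omega T k * (\<tau> j - \<tau> i) + \<phi> i j k + 2 * real_of_int (\<nu> i j k) * pi)\<^sup>2
        + A i j k * (cos (\<theta> i j k) + 1/2 * \<theta> i j k * sin (\<theta> i j k)))"

end

theory Submission
  imports Defs
begin

text \<open>For \<open>|\<theta>| \<le> pi\<close> the even parabola
  \<open>x \<mapsto> cos \<theta> + \<theta> sin \<theta> / 2 - sinc \<theta> / 2 * x\<^sup>2\<close> touches \<open>cos\<close> at \<open>x = \<plusminus>\<theta>\<close> and lies below
  it on \<open>[-pi, pi]\<close>: the derivative of \<open>cos x + sinc \<theta> / 2 * x\<^sup>2\<close> is \<open>x (sinc \<theta> - sinc x)\<close>,
  and \<open>sinc\<close> is decreasing on \<open>[0, pi]\<close>, so this function is minimal at \<open>|x| = |\<theta>|\<close>.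
  Each summand of \<open>Q\<close> is such a parabola evaluated at the wrapped phase, weighted by
  \<open>A \<ge> 0\<close>, and the shift by \<open>2 \<nu> pi\<close> does not change the cosine in \<open>J\<close>.\<close>

lemma sin_eq_mult_sinc: "sin t = t * sinc t"
  by (simp add: sinc_def)

lemma mult_sin_eq_sinc_mult_sq: "t * sin t = sinc t * t\<^sup>2"
  by (simp add: sin_eq_mult_sinc power2_eq_square)

lemma sinc_minus [simp]: "sinc (- t) = sinc t"
  by (simp add: sinc_def)

lemma sinc_abs [simp]: "sinc \<bar>t\<bar> = sinc t"
  by (simp add: abs_if)

lemma mult_cos_le_sin:
  fixes y :: real assumes "0 \<le> y" "y \<le> pi" shows "y * cos y \<le> sin y"
proof -
  let ?f = "\<lambda>t. sin t - t * cos t"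
  have "?f 0 \<le> ?f y"
  proof (rule DERIV_nonneg_imp_increasing_open[OF assms(1)])
    fix x :: real assume x: "0 < x" "x < y"
    have "(?f has_real_derivative x * sin x) (at x)"
      by (auto intro!: derivative_eq_intros)
    moreover have "x * sin x \<ge> 0"
      using x assms sin_ge_zero[of x] by simp
    ultimately show "\<exists>d. (?f has_real_derivative d) (at x) \<and> d \<ge> 0" by blast
  qed (intro continuous_intros)
  then show ?thesis by simp
qed

lemma sinc_antimono:
  fixes y z :: real assumes "0 \<le> y" "y \<le> z" "z \<le> pi"
  shows "sinc z \<le> sinc y"
proof (cases "y = 0")
  case True
  then show ?thesis
    using sin_x_le_x[of z] assms by (cases "z = 0") (auto simp: sinc_def)
next
  case False
  then have "y > 0" using assms(1) by simp
  have "sin z / z \<le> sin y / y"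
  proof (rule DERIV_nonpos_imp_decreasing_open[OF assms(2), where f = "\<lambda>t. sin t / t"])
    fix x :: real assume x: "y < x" "x < z"
    have "((\<lambda>t. sin t / t) has_real_derivative (x * cos x - sin x) / x\<^sup>2) (at x)"
      using x \<open>y > 0\<close> by (auto intro!: derivative_eq_intros simp: power2_eq_square)
    moreover have "(x * cos x - sin x) / x\<^sup>2 \<le> 0"
      using mult_cos_le_sin[of x] x \<open>y > 0\<close> assms by (intro divide_nonpos_nonneg) auto
    ultimately show "\<exists>d. ((\<lambda>t. sin t / t) has_real_derivative d) (at x) \<and> d \<le> 0" by blast
  next
    show "continuous_on {y..z} (\<lambda>t. sin t / t)"
      using \<open>y > 0\<close> by (intro continuous_intros) auto
  qed
  then show ?thesis using \<open>y > 0\<close> assms by (simp add: sinc_def)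
qed

lemma cos_add_sinc_parabola_min_nonneg:
  fixes x b :: real assumes "0 \<le> x" "x \<le> pi" "0 \<le> b" "b \<le> pi"
  shows "cos b + sinc b / 2 * b\<^sup>2 \<le> cos x + sinc b / 2 * x\<^sup>2"
proof -
  define h where "h t = cos t + sinc b / 2 * t\<^sup>2" for t
  have h_deriv: "(h has_real_derivative t * (sinc b - sinc t)) (at t)" for t
  proof -
    have "(h has_real_derivative sinc b * t - sin t) (at t)"
      unfolding h_def by (auto intro!: derivative_eq_intros simp: power2_eq_square)
    then show ?thesis by (simp add: sin_eq_mult_sinc algebra_simps)
  qed
  have h_cont: "continuous_on S h" for S
    unfolding h_def by (intro continuous_intros)
  have "h b \<le> h x"
  proof (cases "x \<le> b")
    case True
    show ?thesis
    proof (rule DERIV_nonpos_imp_decreasing_open[OF True])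
      fix t assume t: "x < t" "t < b"
      then have "t * (sinc b - sinc t) \<le> 0"
        using sinc_antimono[of t b] assms by (intro mult_nonneg_nonpos) auto
      then show "\<exists>d. (h has_real_derivative d) (at t) \<and> d \<le> 0" using h_deriv by blast
    qed (rule h_cont)
  next
    case False
    show ?thesis
    proof (rule DERIV_nonneg_imp_increasing_open[of b x h])
      fix t assume t: "b < t" "t < x"
      then have "t * (sinc b - sinc t) \<ge> 0"
        using sinc_antimono[of b t] assms by (intro mult_nonneg_nonneg) auto
      then show "\<exists>d. (h has_real_derivative d) (at t) \<and> d \<ge> 0" using h_deriv by blast
    qed (use False h_cont in auto)
  qed
  then show ?thesis by (simp add: h_def)
qed

lemma cos_add_sinc_parabola_min:
  fixes x b :: real assumes "\<bar>x\<bar> \<le> pi" "\<bar>b\<bar> \<le> pi"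
  shows "cos b + sinc b / 2 * b\<^sup>2 \<le> cos x + sinc b / 2 * x\<^sup>2"
  using cos_add_sinc_parabola_min_nonneg[of "\<bar>x\<bar>" "\<bar>b\<bar>"] assms by simp

lemma cos_add_int_mult_2pi: "cos (y + 2 * real_of_int n * pi) = cos y"
  using cos_int_2pin[of n] sin_int_2pin[of n]
  by (simp add: cos_add mult.commute mult.left_commute)

lemma Qaux_summand_le:
  fixes a y \<theta> :: real and n :: int
  assumes "a \<ge> 0" "\<theta> \<in> {-pi..pi}" "\<bar>y + 2 * real_of_int n * pi\<bar> \<le> pi"
  shows "- Bcoef a \<theta> * (y + 2 * real_of_int n * pi)\<^sup>2 + a * (cos \<theta> + 1/2 * \<theta> * sin \<theta>)
    \<le> a * cos y"
proof -
  let ?x = "y + 2 * real_of_int n * pi"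
  have "\<bar>\<theta>\<bar> \<le> pi"
    using assms(2) by auto
  moreover have "\<theta> * sin \<theta> = sinc \<theta> * \<theta>\<^sup>2"
    by (rule mult_sin_eq_sinc_mult_sq)
  ultimately have "cos \<theta> + 1/2 * \<theta> * sin \<theta> - sinc \<theta> / 2 * ?x\<^sup>2 \<le> cos ?x"
    using cos_add_sinc_parabola_min[OF assms(3), of \<theta>] by simp
  then have "a * (cos \<theta> + 1/2 * \<theta> * sin \<theta> - sinc \<theta> / 2 * ?x\<^sup>2) \<le> a * cos y"
    using assms(1) by (simp only: cos_add_int_mult_2pi mult_left_mono)
  then show ?thesis by (simp add: Bcoef_def algebra_simps)
qed

lemma Qaux_summand_eq:
  fixes a y \<theta> :: real and n :: int
  assumes "\<theta> = y + 2 * real_of_int n * pi"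
  shows "- Bcoef a \<theta> * (y + 2 * real_of_int n * pi)\<^sup>2 + a * (cos \<theta> + 1/2 * \<theta> * sin \<theta>)
    = a * cos y"
proof -
  have "\<theta> * sin \<theta> = sinc \<theta> * \<theta>\<^sup>2"
    by (rule mult_sin_eq_sinc_mult_sq)
  moreover have "cos \<theta> = cos y"
    unfolding assms by (rule cos_add_int_mult_2pi)
  ultimately show ?thesis
    unfolding assms[symmetric] by (simp add: Bcoef_def algebra_simps)
qed

theorem theorem2:
  fixes M T :: nat
    and A \<phi> \<theta> :: "nat \<Rightarrow> nat \<Rightarrow> nat \<Rightarrow> real"
    and \<nu> :: "nat \<Rightarrow> nat \<Rightarrow> nat \<Rightarrow> int"
    and \<tau> :: "nat \<Rightarrow> real"
  assumes "M \<ge> 2" and "T > 0" and "even T"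
    and "\<And>i j k. i \<in> {1..M} \<Longrightarrow> j \<in> {1..M} \<Longrightarrow> k \<in> {0..T div 2} \<Longrightarrow> A i j k \<ge> 0"
    and "\<And>i j k. i \<in> {1..M} \<Longrightarrow> j \<in> {1..M} \<Longrightarrow> k \<in> {0..T div 2} \<Longrightarrow>
           \<theta> i j k \<in> {-pi..pi}"
    and "\<And>i j k. i \<in> {1..M} \<Longrightarrow> j \<in> {1..M} \<Longrightarrow> k \<in> {0..T div 2} \<Longrightarrow>
           \<bar>omega T k * (\<tau> j - \<tau> i) + \<phi> i j k + 2 * real_of_int (\<nu> i j k) * pi\<bar> \<le> pi"
  shows "Jobj M T A \<phi> \<tau> \<ge> Qaux M T A \<phi> \<nu> \<tau> \<theta> \<and>
      ((\<forall>i\<in>{1..M}. \<forall>j\<in>{1..M}. \<forall>k\<in>{0..T div 2}.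
            \<theta> i j k = omega T k * (\<tau> j - \<tau> i) + \<phi> i j k + 2 * real_of_int (\<nu> i j k) * pi)
         \<longrightarrow> Qaux M T A \<phi> \<nu> \<tau> \<theta> = Jobj M T A \<phi> \<tau>)"
proof (intro conjI impI)
  show "Qaux M T A \<phi> \<nu> \<tau> \<theta> \<le> Jobj M T A \<phi> \<tau>"
    unfolding Jobj_def Qaux_def
    by (intro mult_left_mono sum_mono Qaux_summand_le) (use assms(4-6) in auto)
next
  assume "\<forall>i\<in>{1..M}. \<forall>j\<in>{1..M}. \<forall>k\<in>{0..T div 2}.
    \<theta> i j k = omega T k * (\<tau> j - \<tau> i) + \<phi> i j k + 2 * real_of_int (\<nu> i j k) * pi"
  then show "Qaux M T A \<phi> \<nu> \<tau> \<theta> = Jobj M T A \<phi> \<tau>"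
    unfolding Jobj_def Qaux_def by (intro arg_cong[where f = "(*) _"] sum.cong refl Qaux_summand_eq) auto
qed

end
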